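(* Given an unknown $n$-qubit state $\rho$, any $\epsilon>0$, and any collection of $M$ $n$-qubit Pauli observables $P_1,\dots,P_M$, there is a learning algorithm using $n$ qubits of quantum memory that measures $\mathcal{O}(\log(M)/\epsilon^2)$ copies of $\rho$ and outputs estimates of $|\mathrm{Tr}(P_i\rho)|^2$ that are within additive error $\epsilon$ simultaneously for all $i\in[M]$, with probability at least $2/3$.
   Context: An $n$-qubit Pauli observable is a tensor product $\sigma_1\otimes\cdots\otimes\sigma_n$ with each $\sigma_j\in\{I,X,Y,Z\}$ (the standard Pauli matrices). A learning algorithm with $n$ qubits of quantum memory may store an $n$-qubit quantum state between rounds; in particular it may store one copy of $\rho$ and then perform a joint measurement on $\rho\otimes\rho$ (that copy together with a fresh copy). *)

theory Defs
  imports "Jordan_Normal_Form.Matrix" Complex_Main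
begin

definition mtrace :: "complex mat \<Rightarrow> complex" where
  "mtrace A = (\<Sum>i<dim_row A. A $$ (i,i))"

definition kron :: "complex mat \<Rightarrow> complex mat \<Rightarrow> complex mat" where
  "kron A B = mat (dim_row A * dim_row B) (dim_col A * dim_col B)
     (\<lambda>(i,j). A $$ (i div dim_row B, j div dim_col B) * B $$ (i mod dim_row B, j mod dim_col B))"

definition psd :: "nat \<Rightarrow> complex mat \<Rightarrow> bool" where
  "psd d A \<longleftrightarrow> A \<in> carrier_mat d d \<and>
     (\<forall>v \<in> carrier_vec d. Im (conjugate v \<bullet> (A *\<^sub>v v)) = 0 \<and> Re (conjugate v \<bullet> (A *\<^sub>v v)) \<ge> 0)"

definition density :: "nat \<Rightarrow> complex mat \<Rightarrow> bool" where
  "density n \<rho> \<longleftrightarrow> psd (2^n) \<rho> \<and> mtrace \<rho> = 1"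

(* single-qubit Pauli matrices: 0 = I, 1 = X, 2 = Y, 3 = Z *)
definition pauli :: "nat \<Rightarrow> complex mat" where
  "pauli k = (if k = 0 then mat 2 2 (\<lambda>(i,j). if i = j then 1 else 0)
     else if k = 1 then mat 2 2 (\<lambda>(i,j). if i = j then 0 else 1)
     else if k = 2 then mat 2 2 (\<lambda>(i,j). if i = j then 0 else if i = 0 then - \<i> else \<i>)
     else mat 2 2 (\<lambda>(i,j). if i = j then (if i = 0 then 1 else -1) else 0))"

(* n-qubit Pauli observable sigma_1 \<otimes> ... \<otimes> sigma_n given by a word over {0,1,2,3} *)
definition is_pauli_word :: "nat \<Rightarrow> nat list \<Rightarrow> bool" where
  "is_pauli_word n w \<longleftrightarrow> length w = n \<and> set w \<subseteq> {..<4}"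

definition pauli_obs :: "nat list \<Rightarrow> complex mat" where
  "pauli_obs w = foldr (\<lambda>k A. kron (pauli k) A) w (1\<^sub>m 1)"

definition is_povm :: "nat \<Rightarrow> nat \<Rightarrow> (nat \<Rightarrow> complex mat) \<Rightarrow> bool" where
  "is_povm d m E \<longleftrightarrow> (\<forall>k<m. psd d (E k)) \<and>
     (\<forall>i<d. \<forall>j<d. (\<Sum>k<m. E k $$ (i,j)) = (1\<^sub>m d) $$ (i,j))"

(* Two-copy protocol with n qubits of memory: in each of T rounds the learner stores one copy
   of rho (n qubits of memory) and measures it jointly with a fresh copy, i.e. measures rho\<otimes>rho
   with a 2n-qubit POVM with outcomes {..<m}, chosen adaptively from the history of outcomes.
   E h k = POVM element for outcome k after history h. *)
definition valid_protocol :: "nat \<Rightarrow> nat \<Rightarrow> nat \<Rightarrow> (nat list \<Rightarrow> nat \<Rightarrow> complex mat) \<Rightarrow> bool" where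
  "valid_protocol n T m E \<longleftrightarrow>
     (\<forall>h. length h < T \<and> set h \<subseteq> {..<m} \<longrightarrow> is_povm (2^(2*n)) m (E h))"

definition outcome_seqs :: "nat \<Rightarrow> nat \<Rightarrow> nat list set" where
  "outcome_seqs T m = {xs. length xs = T \<and> set xs \<subseteq> {..<m}}"

definition seq_prob :: "complex mat \<Rightarrow> (nat list \<Rightarrow> nat \<Rightarrow> complex mat) \<Rightarrow> nat list \<Rightarrow> real" where
  "seq_prob \<rho> E xs = (\<Prod>t<length xs. Re (mtrace (E (take t xs) (xs ! t) * kron \<rho> \<rho>)))"

definition success_prob ::
  "nat \<Rightarrow> nat \<Rightarrow> (nat list \<Rightarrow> nat \<Rightarrow> complex mat) \<Rightarrow> (nat list \<Rightarrow> nat \<Rightarrow> real)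
   \<Rightarrow> nat \<Rightarrow> (nat \<Rightarrow> nat list) \<Rightarrow> real \<Rightarrow> complex mat \<Rightarrow> real" where
  "success_prob T m E est M P \<epsilon> \<rho> =
     (\<Sum>xs \<in> outcome_seqs T m.
        if (\<forall>i<M. \<bar>est xs i - (cmod (mtrace (pauli_obs (P i) * \<rho>)))^2\<bar> \<le> \<epsilon>)
        then seq_prob \<rho> E xs else 0)"

end

theory Submission
  imports Defs
begin

(* Measure \<rho> \<otimes> \<rho> in the Bell basis, i.e. the orthonormal basis of vectorised Pauli words
   Q / sqrt (2^n). For every Pauli word P the observable P \<otimes> P is diagonal in this basis with
   eigenvalues \<plusminus>1 (because P Q P\<^sup>T = \<plusminus>Q), so |Tr (P \<rho>)|\<^sup>2 = Tr ((P \<otimes> P)(\<rho> \<otimes> \<rho>)) is the mean of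
   a \<plusminus>1-valued function of a single Bell outcome -- simultaneously for all P. Averaging
   T = O(log M / \<epsilon>\<^sup>2) independent outcomes, a Chernoff bound for each P_i and a union bound
   give all M estimates to within \<epsilon> with probability 2/3. Nonnegativity of the outcome
   probabilities needs \<rho> \<otimes> \<rho> \<ge> 0, which follows from a Gram factorisation of positive
   semidefinite matrices. *)

lemma sum_lessThan_mult_div_mod:
  fixes g :: "nat \<Rightarrow> nat \<Rightarrow> 'a::comm_monoid_add"
  shows "(\<Sum>i<a*b. g (i div b) (i mod b)) = (\<Sum>x<a. \<Sum>y<b. g x y)"
proof -
  have "(\<Sum>i<a*b. g (i div b) (i mod b)) = (\<Sum>x<a. \<Sum>i\<in>{x*b..<x*b+b}. g (i div b) (i mod b))"
    using sum.nat_group[of "\<lambda>i. g (i div b) (i mod b)" b a] by simp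
  also have "\<dots> = (\<Sum>x<a. \<Sum>y<b. g x y)"
  proof (rule sum.cong[OF refl])
    fix x
    have "i div b = x \<and> i mod b = i - x*b" if "x*b \<le> i" "i < x*b+b" for i
      using that div_nat_eqI[of b x i] by (simp add: mult.commute minus_div_mult_eq_mod[symmetric])
    then show "(\<Sum>i\<in>{x*b..<x*b+b}. g (i div b) (i mod b)) = (\<Sum>y<b. g x y)"
      by (intro sum.reindex_bij_witness[of _ "\<lambda>y. x*b+y" "\<lambda>i. i - x*b"]) auto
  qed
  finally show ?thesis .
qed

section \<open>Nonnegative Hermitian forms\<close>

definition quad_form :: "'a set \<Rightarrow> ('a \<Rightarrow> 'a \<Rightarrow> complex) \<Rightarrow> ('a \<Rightarrow> complex) \<Rightarrow> complex" where
  "quad_form S A v = (\<Sum>i\<in>S. \<Sum>j\<in>S. cnj (v i) * A i j * v j)"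

definition hermitian_on :: "'a set \<Rightarrow> ('a \<Rightarrow> 'a \<Rightarrow> complex) \<Rightarrow> bool" where
  "hermitian_on S A \<longleftrightarrow> (\<forall>i\<in>S. \<forall>j\<in>S. A j i = cnj (A i j))"

definition nonneg_form_on :: "'a set \<Rightarrow> ('a \<Rightarrow> 'a \<Rightarrow> complex) \<Rightarrow> bool" where
  "nonneg_form_on S A \<longleftrightarrow> (\<forall>v. 0 \<le> Re (quad_form S A v))"

lemma quad_form_cong: "(\<And>i. i \<in> S \<Longrightarrow> v i = v' i) \<Longrightarrow> quad_form S A v = quad_form S A v'"
  unfolding quad_form_def by (intro sum.cong refl) auto

lemma nonneg_form_on_cong:
  "(\<And>i j. i \<in> S \<Longrightarrow> j \<in> S \<Longrightarrow> A i j = B i j) \<Longrightarrow> nonneg_form_on S A \<longleftrightarrow> nonneg_form_on S B"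
  unfolding nonneg_form_on_def quad_form_def by (simp cong: sum.cong)

lemma quad_form_support:
  assumes "finite S" "T \<subseteq> S" "\<And>k. k \<in> S - T \<Longrightarrow> v k = 0"
  shows "quad_form S A v = quad_form T A v"
proof -
  have "quad_form S A v = (\<Sum>i\<in>T. \<Sum>j\<in>S. cnj (v i) * A i j * v j)"
    unfolding quad_form_def using assms by (intro sum.mono_neutral_right) auto
  also have "\<dots> = quad_form T A v"
    unfolding quad_form_def using assms by (intro sum.cong refl sum.mono_neutral_right) auto
  finally show ?thesis .
qed

lemma quad_form_insert:
  assumes "finite S" "s \<notin> S"
  shows "quad_form (insert s S) A v = cnj (v s) * A s s * v s + cnj (v s) * (\<Sum>j\<in>S. A s j * v j)
     + (\<Sum>i\<in>S. cnj (v i) * A i s) * v s + quad_form S A v"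
  using assms unfolding quad_form_def
  by (simp add: sum.insert sum.distrib sum_distrib_left sum_distrib_right algebra_simps)

lemma quad_form_two_points:
  assumes "i \<noteq> j"
  shows "quad_form {i,j} A (\<lambda>k. if k = i then a else if k = j then b else 0)
    = cnj a * A i i * a + cnj a * A i j * b + cnj b * A j i * a + cnj b * A j j * b"
  using assms unfolding quad_form_def by (simp add: algebra_simps)

lemma nonneg_form_on_mono:
  assumes "finite S" "T \<subseteq> S" "nonneg_form_on S A"
  shows "nonneg_form_on T A"
  unfolding nonneg_form_on_def
proof
  fix v :: "'a \<Rightarrow> complex"
  define v' where "v' k = (if k \<in> T then v k else 0)" for k
  have "quad_form S A v' = quad_form T A v'"
    using assms(1,2) by (intro quad_form_support) (auto simp: v'_def)
  also have "\<dots> = quad_form T A v"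
    by (rule quad_form_cong) (simp add: v'_def)
  finally show "0 \<le> Re (quad_form T A v)" using assms(3) by (metis nonneg_form_on_def)
qed

lemma nonneg_form_on_diag:
  assumes "finite S" "s \<in> S" "nonneg_form_on S A"
  shows "0 \<le> Re (A s s)"
proof -
  have "nonneg_form_on {s} A" using nonneg_form_on_mono assms by blast
  then have "0 \<le> Re (quad_form {s} A (\<lambda>_. 1))" unfolding nonneg_form_on_def by blast
  then show ?thesis by (simp add: quad_form_def)
qed

lemma nonneg_form_zero_diag_row:
  assumes "finite S" "s \<in> S" "j \<in> S" "hermitian_on S A" "nonneg_form_on S A" "A s s = 0"
  shows "A s j = 0"
proof (rule ccontr)
  assume c0: "A s j \<noteq> 0"
  then have js: "j \<noteq> s" using assms(6) by auto
  define c where "c = A s j"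
  define R where "R = (Re (A j j) + 1) / (2 * (cmod c)^2)"
  have Ajs: "A j s = cnj c" using assms(2-4) unfolding hermitian_on_def c_def by blast
  have "0 \<le> Re (quad_form {s,j} A (\<lambda>k. if k = s then - complex_of_real R * c else if k = j then 1 else 0))"
    using nonneg_form_on_mono[of S "{s,j}" A] assms unfolding nonneg_form_on_def by blast
  also have "\<dots> = Re (A j j) - 2 * R * (cmod c)^2"
    using js assms(6) Ajs unfolding quad_form_two_points[OF js[symmetric]] c_def[symmetric]
    by (simp add: algebra_simps cmod_power2) (simp add: power2_eq_square)
  also have "\<dots> = -1" using c0 unfolding R_def c_def by (simp add: field_simps)
  finally show False by simp
qed

lemma hermitian_on_diag_real:
  assumes "hermitian_on S A" "s \<in> S"
  shows "A s s = complex_of_real (Re (A s s))"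
proof -
  have "A s s = cnj (A s s)" using assms unfolding hermitian_on_def by blast
  then show ?thesis by (simp add: complex_eq_iff)
qed

lemma nonneg_form_schur_complement:
  assumes fin: "finite S" and sS: "s \<notin> S"
    and herm: "hermitian_on (insert s S) A" and nonneg: "nonneg_form_on (insert s S) A"
    and pos: "0 < Re (A s s)"
  shows "nonneg_form_on S (\<lambda>i j. A i j - A i s * A s j / A s s)"
  unfolding nonneg_form_on_def
proof
  fix v :: "'a \<Rightarrow> complex"
  define b where "b = (\<Sum>j\<in>S. A s j * v j)"
  define v' where "v' = v(s := - b / A s s)"
  have Ass: "A s s = complex_of_real (Re (A s s))" using hermitian_on_diag_real[OF herm insertI1] .
  have "cnj (v i) * A i s = cnj (A s i * v i)" if "i \<in> S" for i
  proof -
    have "A i s = cnj (A s i)" using herm that unfolding hermitian_on_def by blast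
    then show ?thesis by (simp add: mult.commute)
  qed
  then have col: "(\<Sum>i\<in>S. cnj (v i) * A i s) = cnj b"
    unfolding b_def cnj_sum by (rule sum.cong[OF refl])
  have v'S: "v' i = v i" if "i \<in> S" for i using that sS by (auto simp: v'_def)
  have "(\<Sum>j\<in>S. A s j * v' j) = b" "(\<Sum>i\<in>S. cnj (v' i) * A i s) = cnj b"
    "quad_form S A v' = quad_form S A v"
    using v'S col unfolding b_def by (auto intro!: sum.cong quad_form_cong)
  then have "quad_form (insert s S) A v' = cnj (v' s) * A s s * v' s + cnj (v' s) * b + cnj b * v' s + quad_form S A v"
    using quad_form_insert[OF fin sS, of A v'] by simp
  also have "\<dots> = quad_form S A v - cnj b * b / A s s"
    unfolding v'_def using pos by (subst (1 2 3 4) Ass) (simp add: field_simps)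
  also have "\<dots> = quad_form S A v - (\<Sum>i\<in>S. cnj (v i) * A i s) * (\<Sum>j\<in>S. A s j * v j) / A s s"
    by (simp only: col flip: b_def)
  also have "\<dots> = quad_form S (\<lambda>i j. A i j - A i s * A s j / A s s) v"
    unfolding quad_form_def
    by (simp add: algebra_simps sum_subtractf sum_distrib_left sum_distrib_right sum_divide_distrib)
  finally have "quad_form (insert s S) A v' = quad_form S (\<lambda>i j. A i j - A i s * A s j / A s s) v" .
  then show "0 \<le> Re (quad_form S (\<lambda>i j. A i j - A i s * A s j / A s s) v)"
    using nonneg unfolding nonneg_form_on_def by metis
qed

lemma nonneg_form_pivot_factor:
  assumes fin: "finite S" and sS: "s \<notin> S"
    and herm: "hermitian_on (insert s S) A" and nonneg: "nonneg_form_on (insert s S) A"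
  defines "w \<equiv> \<lambda>i. A i s / complex_of_real (sqrt (Re (A s s)))"
  shows "nonneg_form_on S (\<lambda>i j. A i j - w i * cnj (w j))"
    and "\<And>j. j \<in> insert s S \<Longrightarrow> A s j = w s * cnj (w j)"
proof -
  define \<alpha> where "\<alpha> = Re (A s s)"
  have Ass: "A s s = complex_of_real \<alpha>"
    unfolding \<alpha>_def by (rule hermitian_on_diag_real[OF herm insertI1])
  have "0 \<le> \<alpha>" unfolding \<alpha>_def using nonneg_form_on_diag[OF _ insertI1 nonneg] fin by simp
  then consider (zero) "\<alpha> = 0" | (pos) "0 < \<alpha>" by linarith
  note pivot_cases = this
  have herm_col: "A j s = cnj (A s j)" if "j \<in> insert s S" for j
    using herm that unfolding hermitian_on_def by blast
  have sqrt_sq: "complex_of_real (sqrt \<alpha>) * complex_of_real (sqrt \<alpha>) = complex_of_real \<alpha>"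
    if "0 < \<alpha>" using that by (simp flip: of_real_mult)
  text \<open>If \<open>\<alpha> = 0\<close>, the junk value \<open>x / 0 = 0\<close> makes \<open>w = 0\<close>, and the pivot row vanishes as well.\<close>
  show "nonneg_form_on S (\<lambda>i j. A i j - w i * cnj (w j))"
  proof (cases rule: pivot_cases)
    case zero
    then show ?thesis
      using nonneg_form_on_mono[OF finite_insert[THEN iffD2, OF fin] _ nonneg]
      by (simp add: w_def \<alpha>_def[symmetric] subset_insertI)
  next
    case pos
    have "w i * cnj (w j) = A i s * A s j / A s s" if "j \<in> S" for i j
      using herm_col[of j] that pos sqrt_sq unfolding w_def Ass \<alpha>_def[symmetric]
      by (simp add: field_simps)
    then have "nonneg_form_on S (\<lambda>i j. A i j - w i * cnj (w j))
        \<longleftrightarrow> nonneg_form_on S (\<lambda>i j. A i j - A i s * A s j / A s s)"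
      by (intro nonneg_form_on_cong) simp
    then show ?thesis
      using nonneg_form_schur_complement[OF fin sS herm nonneg] pos unfolding \<alpha>_def by blast
  qed
  show "A s j = w s * cnj (w j)" if j: "j \<in> insert s S" for j
  proof (cases rule: pivot_cases)
    case zero
    then have "A s j = 0"
      using nonneg_form_zero_diag_row[OF _ insertI1 j herm nonneg] fin Ass by simp
    then show ?thesis using zero by (simp add: w_def \<alpha>_def[symmetric])
  next
    case pos
    then show ?thesis
      using herm_col[OF j] sqrt_sq unfolding w_def Ass \<alpha>_def[symmetric] by (simp add: field_simps)
  qed
qed

lemma hermitian_on_subset: "hermitian_on S A \<Longrightarrow> T \<subseteq> S \<Longrightarrow> hermitian_on T A"
  unfolding hermitian_on_def by blast

lemma hermitian_on_diff_outer:
  assumes "hermitian_on S A"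
  shows "hermitian_on S (\<lambda>i j. A i j - w i * cnj (w j))"
  unfolding hermitian_on_def
proof (intro ballI)
  fix i j assume "i \<in> S" "j \<in> S"
  then have "A j i = cnj (A i j)" using assms unfolding hermitian_on_def by blast
  then show "A j i - w j * cnj (w i) = cnj (A i j - w i * cnj (w j))" by (simp add: mult.commute)
qed

lemma nonneg_hermitian_form_gram:
  "finite S \<Longrightarrow> hermitian_on S A \<Longrightarrow> nonneg_form_on S A \<Longrightarrow>
    \<exists>W. \<forall>i\<in>S. \<forall>j\<in>S. A i j = (\<Sum>r\<in>S. W r i * cnj (W r j))"
proof (induction S arbitrary: A rule: finite_induct)
  case empty
  then show ?case by simp
next
  case (insert s S A)
  define w where "w i = A i s / complex_of_real (sqrt (Re (A s s)))" for i
  define A' where "A' i j = A i j - w i * cnj (w j)" for i j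
  note pivot = nonneg_form_pivot_factor[OF insert.hyps insert.prems, folded w_def]
  have "hermitian_on S A'"
    using hermitian_on_diff_outer[OF hermitian_on_subset[OF insert.prems(1)]] unfolding A'_def by blast
  then obtain W' where W': "\<forall>i\<in>S. \<forall>j\<in>S. A' i j = (\<Sum>r\<in>S. W' r i * cnj (W' r j))"
    using insert.IH pivot(1) unfolding A'_def by blast
  define W where "W r i = (if r = s then w i else if i = s then 0 else W' r i)" for r i
  have "A i j = (\<Sum>r\<in>insert s S. W r i * cnj (W r j))" if i: "i \<in> insert s S" and j: "j \<in> insert s S" for i j
  proof -
    have split: "(\<Sum>r\<in>insert s S. W r i * cnj (W r j)) = w i * cnj (w j) + (\<Sum>r\<in>S. W r i * cnj (W r j))"
      using insert.hyps by (simp add: W_def)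
    show ?thesis
    proof (cases "i = s \<or> j = s")
      case True
      have "A i j = w i * cnj (w j)"
      proof (cases "i = s")
        case True
        then show ?thesis using pivot(2)[OF j] by simp
      next
        case False
        then have "A j i = w j * cnj (w i)" using \<open>i = s \<or> j = s\<close> pivot(2)[OF i] by simp
        moreover have "A i j = cnj (A j i)" using insert.prems(1) i j unfolding hermitian_on_def by blast
        ultimately show ?thesis by (simp add: mult.commute)
      qed
      moreover have "(\<Sum>r\<in>S. W r i * cnj (W r j)) = 0"
        using True insert.hyps by (intro sum.neutral) (auto simp: W_def)
      ultimately show ?thesis using split by simp
    next
      case False
      then have "(\<Sum>r\<in>S. W r i * cnj (W r j)) = A' i j"
        using W' i j insert.hyps by (auto simp: W_def intro: sum.cong)
      then show ?thesis using split by (simp add: A'_def)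
    qed
  qed
  then show ?case by blast
qed

lemma quad_form_gram:
  shows "quad_form S (\<lambda>i j. \<Sum>r\<in>R. u r i * cnj (u r j)) v
    = complex_of_real (\<Sum>r\<in>R. (cmod (\<Sum>j\<in>S. cnj (u r j) * v j))^2)"
proof -
  define z where "z r = (\<Sum>j\<in>S. cnj (u r j) * v j)" for r
  have "quad_form S (\<lambda>i j. \<Sum>r\<in>R. u r i * cnj (u r j)) v
      = (\<Sum>i\<in>S. \<Sum>j\<in>S. \<Sum>r\<in>R. (cnj (v i) * u r i) * (cnj (u r j) * v j))"
    unfolding quad_form_def by (simp add: sum_distrib_left sum_distrib_right mult_ac)
  also have "\<dots> = (\<Sum>i\<in>S. \<Sum>r\<in>R. \<Sum>j\<in>S. (cnj (v i) * u r i) * (cnj (u r j) * v j))"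
    by (rule sum.cong[OF refl]) (rule sum.swap)
  also have "\<dots> = (\<Sum>r\<in>R. \<Sum>i\<in>S. \<Sum>j\<in>S. (cnj (v i) * u r i) * (cnj (u r j) * v j))"
    by (rule sum.swap)
  also have "\<dots> = (\<Sum>r\<in>R. (\<Sum>i\<in>S. cnj (v i) * u r i) * z r)"
    unfolding z_def by (simp add: sum_product)
  also have "\<dots> = (\<Sum>r\<in>R. cnj (z r) * z r)"
    unfolding z_def by (simp add: cnj_sum mult.commute)
  also have "\<dots> = complex_of_real (\<Sum>r\<in>R. (cmod (z r))^2)"
    by (simp add: complex_norm_square mult.commute del: of_real_power)
  finally show ?thesis unfolding z_def .
qed

section \<open>Positive semidefinite matrices, traces and tensor products\<close>

lemma quad_form_scalar_prod:
  assumes "A \<in> carrier_mat d d" "v \<in> carrier_vec d"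
  shows "conjugate v \<bullet> (A *\<^sub>v v) = quad_form {..<d} (\<lambda>i j. A $$ (i,j)) (\<lambda>i. v $ i)"
  using assms unfolding quad_form_def
  by (simp add: scalar_prod_def lessThan_atLeast0 sum_distrib_left mult.assoc)

lemma psd_iff_quad_form:
  "psd d A \<longleftrightarrow> A \<in> carrier_mat d d \<and>
    (\<forall>v. Im (quad_form {..<d} (\<lambda>i j. A $$ (i,j)) v) = 0 \<and> 0 \<le> Re (quad_form {..<d} (\<lambda>i j. A $$ (i,j)) v))"
    (is "_ \<longleftrightarrow> _ \<and> (\<forall>v. ?P v)")
proof (cases "A \<in> carrier_mat d d")
  case True
  have qf_vec: "quad_form {..<d} (\<lambda>i j. A $$ (i,j)) v = conjugate (vec d v) \<bullet> (A *\<^sub>v vec d v)" for v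
    unfolding quad_form_scalar_prod[OF True vec_carrier] by (rule quad_form_cong) simp
  have "(\<forall>v\<in>carrier_vec d. Im (conjugate v \<bullet> (A *\<^sub>v v)) = 0 \<and> Re (conjugate v \<bullet> (A *\<^sub>v v)) \<ge> 0)
      \<longleftrightarrow> (\<forall>v. ?P v)"
  proof
    assume H: "\<forall>v\<in>carrier_vec d. Im (conjugate v \<bullet> (A *\<^sub>v v)) = 0 \<and> Re (conjugate v \<bullet> (A *\<^sub>v v)) \<ge> 0"
    show "\<forall>v. ?P v"
    proof
      fix v
      show "?P v" using H vec_carrier[of d v] unfolding qf_vec by blast
    qed
  next
    assume "\<forall>v. ?P v"
    then show "\<forall>v\<in>carrier_vec d. Im (conjugate v \<bullet> (A *\<^sub>v v)) = 0 \<and> Re (conjugate v \<bullet> (A *\<^sub>v v)) \<ge> 0"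
      using quad_form_scalar_prod[OF True] by simp
  qed
  then show ?thesis
    unfolding psd_def using True by blast
qed (simp add: psd_def)

lemma psd_of_gram:
  assumes "A \<in> carrier_mat d d" "finite R"
    and "\<And>i j. i < d \<Longrightarrow> j < d \<Longrightarrow> A $$ (i,j) = (\<Sum>r\<in>R. u r i * cnj (u r j))"
  shows "psd d A"
proof -
  have "quad_form {..<d} (\<lambda>i j. A $$ (i,j)) v = quad_form {..<d} (\<lambda>i j. \<Sum>r\<in>R. u r i * cnj (u r j)) v" for v
    unfolding quad_form_def using assms(3) by (intro sum.cong refl) simp
  then show ?thesis
    using assms(1) unfolding psd_iff_quad_form by (auto simp: quad_form_gram intro!: sum_nonneg)
qed

lemma psd_hermitian:
  assumes "psd d A"
  shows "hermitian_on {..<d} (\<lambda>i j. A $$ (i,j))"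
  unfolding hermitian_on_def
proof (intro ballI)
  fix i j assume i: "i \<in> {..<d}" and j: "j \<in> {..<d}"
  let ?A = "\<lambda>i j. A $$ (i,j)"
  have real: "Im (quad_form {..<d} ?A v) = 0" for v using assms unfolding psd_iff_quad_form by blast
  have "Im (A $$ (k,k)) = 0" if "k < d" for k
  proof -
    have "quad_form {..<d} ?A (\<lambda>l. if l = k then 1 else 0) = quad_form {k} ?A (\<lambda>l. if l = k then 1 else 0)"
      using that by (intro quad_form_support) auto
    then show ?thesis using real[of "\<lambda>l. if l = k then 1 else 0"] by (simp add: quad_form_def)
  qed
  then have diag: "Im (A $$ (i,i)) = 0" "Im (A $$ (j,j)) = 0" using i j by auto
  show "A $$ (j,i) = cnj (A $$ (i,j))"
  proof (cases "i = j")
    case True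
    then show ?thesis using diag by (simp add: complex_eq_iff)
  next
    case False
    have two: "Im (cnj a * A $$ (i,i) * a + cnj a * A $$ (i,j) * b + cnj b * A $$ (j,i) * a + cnj b * A $$ (j,j) * b) = 0" for a b
    proof -
      have "quad_form {..<d} ?A (\<lambda>k. if k = i then a else if k = j then b else 0)
          = quad_form {i,j} ?A (\<lambda>k. if k = i then a else if k = j then b else 0)"
        using i j by (intro quad_form_support) auto
      then show ?thesis
        using real[of "\<lambda>k. if k = i then a else if k = j then b else 0"]
        unfolding quad_form_two_points[OF False] by simp
    qed
    have "Im (A $$ (i,j)) + Im (A $$ (j,i)) = 0" using two[of 1 1] diag by simp
    moreover have "Re (A $$ (i,j)) - Re (A $$ (j,i)) = 0" using two[of 1 \<i>] diag by simp
    ultimately show ?thesis by (simp add: complex_eq_iff)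
  qed
qed

lemma psd_gram:
  assumes "psd d A"
  obtains W where "\<And>i j. i < d \<Longrightarrow> j < d \<Longrightarrow> A $$ (i,j) = (\<Sum>r<d. W r i * cnj (W r j))"
proof -
  have "nonneg_form_on {..<d} (\<lambda>i j. A $$ (i,j))"
    using assms unfolding psd_iff_quad_form nonneg_form_on_def by blast
  then show ?thesis
    using nonneg_hermitian_form_gram[OF _ psd_hermitian[OF assms]] that by blast
qed

lemma mtrace_mult:
  assumes "A \<in> carrier_mat d d" "B \<in> carrier_mat d d"
  shows "mtrace (A * B) = (\<Sum>i<d. \<Sum>j<d. A $$ (i,j) * B $$ (j,i))"
  using assms unfolding mtrace_def by (simp add: scalar_prod_def lessThan_atLeast0)

lemma kron_carrier: "A \<in> carrier_mat a a \<Longrightarrow> B \<in> carrier_mat b b \<Longrightarrow> kron A B \<in> carrier_mat (a*b) (a*b)"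
  unfolding kron_def by auto

lemma kron_entry:
  assumes "A \<in> carrier_mat a a" "B \<in> carrier_mat b b" "i < a*b" "j < a*b"
  shows "kron A B $$ (i,j) = A $$ (i div b, j div b) * B $$ (i mod b, j mod b)"
  using assms unfolding kron_def by auto

lemma div_mod_less_mult:
  assumes "(i::nat) < a * b"
  shows "i div b < a" "i mod b < b"
proof -
  have "0 < b" using assms by (cases b) auto
  then show "i div b < a" "i mod b < b" using assms by (auto simp: less_mult_imp_div_less)
qed

lemma psd_kron:
  assumes "psd a A" "psd b B"
  shows "psd (a*b) (kron A B)"
proof -
  obtain W where W: "\<And>i j. i < a \<Longrightarrow> j < a \<Longrightarrow> A $$ (i,j) = (\<Sum>r<a. W r i * cnj (W r j))"
    using psd_gram[OF assms(1)] by blast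
  obtain V where V: "\<And>i j. i < b \<Longrightarrow> j < b \<Longrightarrow> B $$ (i,j) = (\<Sum>s<b. V s i * cnj (V s j))"
    using psd_gram[OF assms(2)] by blast
  have carr: "A \<in> carrier_mat a a" "B \<in> carrier_mat b b" using assms by (auto simp: psd_def)
  define u where "u = (\<lambda>(r,s) i. W r (i div b) * V s (i mod b))"
  show ?thesis
  proof (rule psd_of_gram[OF kron_carrier[OF carr] finite_cartesian_product[OF finite_lessThan finite_lessThan]])
    fix i j assume i: "i < a*b" and j: "j < a*b"
    have "kron A B $$ (i,j) = (\<Sum>r<a. W r (i div b) * cnj (W r (j div b))) * (\<Sum>s<b. V s (i mod b) * cnj (V s (j mod b)))"
      using kron_entry[OF carr i j] W V div_mod_less_mult[OF i] div_mod_less_mult[OF j] by simp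
    also have "\<dots> = (\<Sum>r<a. \<Sum>s<b. u (r,s) i * cnj (u (r,s) j))"
      by (simp add: sum_product u_def mult_ac) (rule sum.swap)
    also have "\<dots> = (\<Sum>rs\<in>{..<a}\<times>{..<b}. u rs i * cnj (u rs j))"
      by (simp add: sum.cartesian_product)
    finally show "kron A B $$ (i,j) = (\<Sum>rs\<in>{..<a}\<times>{..<b}. u rs i * cnj (u rs j))" .
  qed
qed

lemma mtrace_kron_mult:
  assumes A: "A \<in> carrier_mat a a" "C \<in> carrier_mat a a" and B: "B \<in> carrier_mat b b" "D \<in> carrier_mat b b"
  shows "mtrace (kron A B * kron C D) = mtrace (A * C) * mtrace (B * D)"
proof -
  have "mtrace (kron A B * kron C D)
      = (\<Sum>i<a*b. \<Sum>j<a*b. A $$ (i div b, j div b) * B $$ (i mod b, j mod b) * (C $$ (j div b, i div b) * D $$ (j mod b, i mod b)))"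
    unfolding mtrace_mult[OF kron_carrier[OF A(1) B(1)] kron_carrier[OF A(2) B(2)]]
    by (intro sum.cong refl) (simp add: kron_entry[OF A(1) B(1)] kron_entry[OF A(2) B(2)])
  also have "\<dots> = (\<Sum>i<a*b. \<Sum>x'<a. \<Sum>y'<b.
      A $$ (i div b, x') * B $$ (i mod b, y') * (C $$ (x', i div b) * D $$ (y', i mod b)))"
  proof (rule sum.cong[OF refl])
    fix i
    show "(\<Sum>j<a*b. A $$ (i div b, j div b) * B $$ (i mod b, j mod b) * (C $$ (j div b, i div b) * D $$ (j mod b, i mod b)))
      = (\<Sum>x'<a. \<Sum>y'<b. A $$ (i div b, x') * B $$ (i mod b, y') * (C $$ (x', i div b) * D $$ (y', i mod b)))"
      by (rule sum_lessThan_mult_div_mod[of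
          "\<lambda>x' y'. A $$ (i div b, x') * B $$ (i mod b, y') * (C $$ (x', i div b) * D $$ (y', i mod b))"])
  qed
  also have "\<dots> = (\<Sum>x<a. \<Sum>y<b. \<Sum>x'<a. \<Sum>y'<b. A $$ (x,x') * B $$ (y,y') * (C $$ (x',x) * D $$ (y',y)))"
    by (rule sum_lessThan_mult_div_mod[of
        "\<lambda>x y. \<Sum>x'<a. \<Sum>y'<b. A $$ (x,x') * B $$ (y,y') * (C $$ (x',x) * D $$ (y',y))"])
  also have "\<dots> = (\<Sum>x<a. \<Sum>x'<a. A $$ (x,x') * C $$ (x',x)) * (\<Sum>y<b. \<Sum>y'<b. B $$ (y,y') * D $$ (y',y))"
    by (simp add: sum_product mult_ac)
  also have "\<dots> = mtrace (A * C) * mtrace (B * D)"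
    by (simp add: mtrace_mult[OF A] mtrace_mult[OF B])
  finally show ?thesis .
qed

lemma mtrace_mult_hermitian_real:
  assumes "A \<in> carrier_mat d d" "B \<in> carrier_mat d d"
    and "hermitian_on {..<d} (\<lambda>i j. A $$ (i,j))" "hermitian_on {..<d} (\<lambda>i j. B $$ (i,j))"
  shows "Im (mtrace (A * B)) = 0"
proof -
  have "cnj (A $$ (i,j) * B $$ (j,i)) = A $$ (j,i) * B $$ (i,j)" if "i < d" "j < d" for i j
  proof -
    have "A $$ (j,i) = cnj (A $$ (i,j))" "B $$ (i,j) = cnj (B $$ (j,i))"
      using assms(3,4) that unfolding hermitian_on_def by blast+
    then show ?thesis by simp
  qed
  then have "cnj (mtrace (A * B)) = (\<Sum>i<d. \<Sum>j<d. A $$ (j,i) * B $$ (i,j))"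
    unfolding mtrace_mult[OF assms(1,2)] cnj_sum by (intro sum.cong refl) simp
  also have "\<dots> = mtrace (A * B)"
    unfolding mtrace_mult[OF assms(1,2)] by (rule sum.swap)
  finally show ?thesis by (metis Reals_cnj_iff complex_is_Real_iff)
qed

lemma sum_mtrace_mult:
  assumes "\<And>k. k \<in> K \<Longrightarrow> E k \<in> carrier_mat d d" "F \<in> carrier_mat d d" "X \<in> carrier_mat d d"
    and "\<And>i j. i < d \<Longrightarrow> j < d \<Longrightarrow> (\<Sum>k\<in>K. c k * E k $$ (i,j)) = F $$ (i,j)"
  shows "(\<Sum>k\<in>K. c k * mtrace (E k * X)) = mtrace (F * X)"
proof -
  have "(\<Sum>k\<in>K. c k * mtrace (E k * X)) = (\<Sum>k\<in>K. \<Sum>i<d. \<Sum>j<d. c k * E k $$ (i,j) * X $$ (j,i))"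
    by (intro sum.cong refl) (simp add: mtrace_mult[OF assms(1,3)] sum_distrib_left mult.assoc)
  also have "\<dots> = (\<Sum>i<d. \<Sum>k\<in>K. \<Sum>j<d. c k * E k $$ (i,j) * X $$ (j,i))"
    by (rule sum.swap)
  also have "\<dots> = (\<Sum>i<d. \<Sum>j<d. (\<Sum>k\<in>K. c k * E k $$ (i,j)) * X $$ (j,i))"
    by (intro sum.cong refl) (simp add: sum.swap[of _ K] sum_distrib_right)
  also have "\<dots> = mtrace (F * X)"
    using assms(2-4) by (simp add: mtrace_mult)
  finally show ?thesis .
qed

section \<open>Pauli words\<close>

lemma pauli_carrier [simp]: "pauli k \<in> carrier_mat 2 2"
  by (simp add: pauli_def)

lemma pauli_index:
  assumes "x < 2" "y < 2"
  shows "pauli k $$ (x,y) = (if k = 0 then (if x = y then 1 else 0)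
     else if k = 1 then (if x = y then 0 else 1)
     else if k = 2 then (if x = y then 0 else if x = 0 then - \<i> else \<i>)
     else (if x = y then (if x = 0 then 1 else -1) else 0))"
  using assms by (simp add: pauli_def)

lemma less_2_cases: "(x::nat) < 2 \<longleftrightarrow> x = 0 \<or> x = 1" by auto

lemma sum_lessThan_4: "(\<Sum>q<(4::nat). f q) = f 0 + f 1 + f 2 + (f 3 :: 'a::comm_monoid_add)"
  by (simp add: numeral_eq_Suc lessThan_Suc add.commute add.left_commute)

lemma pauli_cnj_swap:
  assumes "x < 2" "y < 2"
  shows "pauli k $$ (y,x) = cnj (pauli k $$ (x,y))"
  using assms unfolding less_2_cases by (auto simp: pauli_index complex_eq_iff)

text \<open>\<open>pauli_sign p q\<close> is the sign with \<open>\<sigma>\<^sub>p \<sigma>\<^sub>q \<sigma>\<^sub>p\<^sup>T = pauli_sign p q \<cdot> \<sigma>\<^sub>q\<close>, i.e. the eigenvalue of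
  \<open>\<sigma>\<^sub>p \<otimes> \<sigma>\<^sub>p\<close> on the vectorisation of \<open>\<sigma>\<^sub>q\<close>.\<close>

definition pauli_sign :: "nat \<Rightarrow> nat \<Rightarrow> real" where
  "pauli_sign p q = (if p = 0 then 1 else if p = 1 then (if q \<le> 1 then 1 else -1)
    else if p = 2 then (if q = 1 \<or> q = 3 then 1 else -1) else (if q = 0 \<or> q = 3 then 1 else -1))"

lemma pauli_sign_sum:
  assumes "x < 2" "y < 2" "a < 2" "b < 2"
  shows "(\<Sum>q<4. complex_of_real (pauli_sign p q) * pauli q $$ (x,y) * cnj (pauli q $$ (a,b)))
     = 2 * pauli p $$ (x,a) * pauli p $$ (y,b)"
  using assms unfolding sum_lessThan_4 less_2_cases
  by (auto simp: pauli_index pauli_sign_def complex_eq_iff)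

fun word_sign :: "nat list \<Rightarrow> nat list \<Rightarrow> real" where
  "word_sign (p # P) (q # Q) = pauli_sign p q * word_sign P Q"
| "word_sign _ _ = 1"

lemma abs_word_sign_le_1: "\<bar>word_sign P Q\<bar> \<le> 1"
  by (induction P Q rule: word_sign.induct) (auto simp: pauli_sign_def abs_mult)

lemma word_sign_replicate_0: "word_sign (replicate n 0) Q = 1"
proof (induction n arbitrary: Q)
  case (Suc n)
  then show ?case by (cases Q) (auto simp: pauli_sign_def)
qed simp

fun pauli_word_entry :: "nat list \<Rightarrow> nat \<Rightarrow> nat \<Rightarrow> complex" where
  "pauli_word_entry [] x y = (if x = 0 \<and> y = 0 then 1 else 0)"
| "pauli_word_entry (k # w) x y = pauli k $$ (x div 2^length w, y div 2^length w)
     * pauli_word_entry w (x mod 2^length w) (y mod 2^length w)"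

lemma pauli_obs_Cons: "pauli_obs (k # w) = kron (pauli k) (pauli_obs w)"
  by (simp add: pauli_obs_def)

lemma pauli_obs_carrier [simp]: "pauli_obs w \<in> carrier_mat (2^length w) (2^length w)"
proof (induction w)
  case (Cons k w)
  then show ?case using kron_carrier[OF pauli_carrier Cons.IH] by (simp add: pauli_obs_Cons)
qed (simp add: pauli_obs_def)

lemma pauli_obs_index:
  "x < 2^length w \<Longrightarrow> y < 2^length w \<Longrightarrow> pauli_obs w $$ (x,y) = pauli_word_entry w x y"
proof (induction w arbitrary: x y)
  case Nil
  then show ?case by (simp add: pauli_obs_def)
next
  case (Cons k w)
  then show ?case
    using kron_entry[OF pauli_carrier[of k] pauli_obs_carrier[of w], of x y]
      div_mod_less_mult[of x 2 "2^length w"] div_mod_less_mult[of y 2 "2^length w"]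
    by (simp add: pauli_obs_Cons)
qed

lemma pauli_word_entry_cnj_swap:
  "x < 2^length w \<Longrightarrow> y < 2^length w \<Longrightarrow> pauli_word_entry w y x = cnj (pauli_word_entry w x y)"
proof (induction w arbitrary: x y)
  case (Cons k w)
  have "x < 2 * 2^length w" "y < 2 * 2^length w" using Cons.prems by simp_all
  then have "pauli k $$ (y div 2^length w, x div 2^length w) = cnj (pauli k $$ (x div 2^length w, y div 2^length w))"
    and "pauli_word_entry w (y mod 2^length w) (x mod 2^length w)
      = cnj (pauli_word_entry w (x mod 2^length w) (y mod 2^length w))"
    using div_mod_less_mult by (auto intro: pauli_cnj_swap Cons.IH)
  then show ?case by (simp only: pauli_word_entry.simps complex_cnj_mult)
qed simp

lemma pauli_obs_hermitian: "hermitian_on {..<2^length w} (\<lambda>i j. pauli_obs w $$ (i,j))"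
  unfolding hermitian_on_def
proof (intro ballI)
  fix i j :: nat assume "i \<in> {..<2^length w}" "j \<in> {..<2^length w}"
  then have "i < 2^length w" "j < 2^length w" by simp_all
  then show "pauli_obs w $$ (j,i) = cnj (pauli_obs w $$ (i,j))"
    unfolding pauli_obs_index[OF \<open>i < _\<close> \<open>j < _\<close>] pauli_obs_index[OF \<open>j < _\<close> \<open>i < _\<close>]
    by (rule pauli_word_entry_cnj_swap)
qed

lemma div_mod_eq_iff: "(x::nat) = y \<longleftrightarrow> x div m = y div m \<and> x mod m = y mod m"
  by (metis div_mult_mod_eq)

lemma pauli_word_entry_replicate_0:
  "x < 2^n \<Longrightarrow> y < 2^n \<Longrightarrow> pauli_word_entry (replicate n 0) x y = (if x = y then 1 else 0)"
proof (induction n arbitrary: x y)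
  case (Suc n)
  then show ?case
    using div_mod_less_mult[of x 2 "2^n"] div_mod_less_mult[of y 2 "2^n"] div_mod_eq_iff[of x y "2^n"]
    by (auto simp: pauli_index)
qed simp

lemma pauli_obs_replicate_0: "pauli_obs (replicate n 0) = 1\<^sub>m (2^n)"
  using pauli_obs_carrier[of "replicate n 0"]
  by (intro eq_matI) (auto simp: pauli_obs_index pauli_word_entry_replicate_0)

fun word_of_index :: "nat \<Rightarrow> nat \<Rightarrow> nat list" where
  "word_of_index 0 k = []"
| "word_of_index (Suc n) k = (k div 4^n) # word_of_index n (k mod 4^n)"

lemma length_word_of_index [simp]: "length (word_of_index n k) = n"
  by (induction n arbitrary: k) auto

lemma word_sign_sum:
  assumes "x < 2^length P" "y < 2^length P" "a < 2^length P" "b < 2^length P"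
  shows "(\<Sum>k<4^length P. complex_of_real (word_sign P (word_of_index (length P) k))
            * pauli_word_entry (word_of_index (length P) k) x y * cnj (pauli_word_entry (word_of_index (length P) k) a b))
       = 2^length P * pauli_word_entry P x a * pauli_word_entry P y b"
  using assms
proof (induction P arbitrary: x y a b)
  case (Cons p P)
  define n where "n = length P"
  define g where "g q = complex_of_real (pauli_sign p q) * pauli q $$ (x div 2^n, y div 2^n)
        * cnj (pauli q $$ (a div 2^n, b div 2^n))" for q
  define h where "h k = complex_of_real (word_sign P (word_of_index n k))
        * pauli_word_entry (word_of_index n k) (x mod 2^n) (y mod 2^n)
        * cnj (pauli_word_entry (word_of_index n k) (a mod 2^n) (b mod 2^n))" for k
  have bounds: "x div 2^n < 2" "y div 2^n < 2" "a div 2^n < 2" "b div 2^n < 2"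
    using Cons.prems div_mod_less_mult[of _ 2 "2^n"] by (auto simp: n_def)
  have "(\<Sum>k<4^length (p#P). complex_of_real (word_sign (p#P) (word_of_index (length (p#P)) k))
          * pauli_word_entry (word_of_index (length (p#P)) k) x y
          * cnj (pauli_word_entry (word_of_index (length (p#P)) k) a b))
      = (\<Sum>k<4*4^n. g (k div 4^n) * h (k mod 4^n))"
    by (simp add: n_def g_def h_def mult_ac)
  also have "\<dots> = (\<Sum>q<4. g q) * (\<Sum>k<4^n. h k)"
    unfolding sum_product by (rule sum_lessThan_mult_div_mod[of "\<lambda>q k. g q * h k"])
  also have "(\<Sum>k<4^n. h k) = 2^n * pauli_word_entry P (x mod 2^n) (a mod 2^n) * pauli_word_entry P (y mod 2^n) (b mod 2^n)"
    unfolding h_def n_def by (rule Cons.IH) auto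
  also have "(\<Sum>q<4. g q) = 2 * pauli p $$ (x div 2^n, a div 2^n) * pauli p $$ (y div 2^n, b div 2^n)"
    unfolding g_def using bounds by (rule pauli_sign_sum)
  finally show ?case by (simp add: n_def mult_ac)
qed simp

section \<open>The Bell measurement\<close>

text \<open>The normalised vectorisations of the \<open>4\<^sup>n\<close> Pauli words, i.e. the (generalised) Bell basis.\<close>

definition bell_vec :: "nat \<Rightarrow> nat \<Rightarrow> nat \<Rightarrow> complex" where
  "bell_vec n k i = pauli_word_entry (word_of_index n k) (i div 2^n) (i mod 2^n) / complex_of_real (sqrt (2^n))"

definition bell_povm :: "nat \<Rightarrow> nat \<Rightarrow> complex mat" where
  "bell_povm n k = mat (2^(2*n)) (2^(2*n)) (\<lambda>(i,j). bell_vec n k i * cnj (bell_vec n k j))"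

lemma power_2_double: "(2::nat)^(2*n) = 2^n * 2^n"
  by (simp add: mult_2 power_add)

lemma bell_povm_carrier: "bell_povm n k \<in> carrier_mat (2^(2*n)) (2^(2*n))"
  by (simp add: bell_povm_def)

lemma bell_vec_outer:
  "bell_vec n k i * cnj (bell_vec n k j)
    = pauli_word_entry (word_of_index n k) (i div 2^n) (i mod 2^n)
      * cnj (pauli_word_entry (word_of_index n k) (j div 2^n) (j mod 2^n)) / 2^n"
proof -
  have "complex_of_real (sqrt (2^n)) * complex_of_real (sqrt (2^n)) = 2^n"
    by (simp flip: of_real_mult)
  then show ?thesis by (simp add: bell_vec_def field_simps)
qed

lemma bell_povm_sign_sum:
  assumes "length P = n" "i < 2^(2*n)" "j < 2^(2*n)"
  shows "(\<Sum>k<4^n. complex_of_real (word_sign P (word_of_index n k)) * bell_povm n k $$ (i,j))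
    = kron (pauli_obs P) (pauli_obs P) $$ (i,j)"
proof -
  have ij: "i < 2^n * 2^n" "j < 2^n * 2^n" using assms(2,3) by (simp_all add: power_2_double)
  note bounds = div_mod_less_mult[OF ij(1)] div_mod_less_mult[OF ij(2)]
  have "(\<Sum>k<4^n. complex_of_real (word_sign P (word_of_index n k)) * bell_povm n k $$ (i,j))
      = (\<Sum>k<4^n. complex_of_real (word_sign P (word_of_index n k))
          * pauli_word_entry (word_of_index n k) (i div 2^n) (i mod 2^n)
          * cnj (pauli_word_entry (word_of_index n k) (j div 2^n) (j mod 2^n))) / 2^n"
    using assms(2,3) by (simp add: bell_povm_def bell_vec_outer sum_divide_distrib mult.assoc)
  also have "\<dots> = pauli_word_entry P (i div 2^n) (j div 2^n) * pauli_word_entry P (i mod 2^n) (j mod 2^n)"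
    using word_sign_sum[of "i div 2^n" P "i mod 2^n" "j div 2^n" "j mod 2^n"] bounds assms(1) by simp
  also have "\<dots> = kron (pauli_obs P) (pauli_obs P) $$ (i,j)"
  proof -
    have "pauli_obs P \<in> carrier_mat (2^n) (2^n)" using assms(1) by auto
    then show ?thesis using kron_entry[OF _ _ ij] bounds assms(1) by (simp add: pauli_obs_index)
  qed
  finally show ?thesis .
qed

lemma bell_povm_sum:
  assumes "i < 2^(2*n)" "j < 2^(2*n)"
  shows "(\<Sum>k<4^n. bell_povm n k $$ (i,j)) = 1\<^sub>m (2^(2*n)) $$ (i,j)"
proof -
  have "(\<Sum>k<4^n. bell_povm n k $$ (i,j)) = kron (1\<^sub>m (2^n)) (1\<^sub>m (2^n)) $$ (i,j)"
    using bell_povm_sign_sum[of "replicate n 0" n i j] assms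
    by (simp add: word_sign_replicate_0 pauli_obs_replicate_0)
  also have "\<dots> = 1\<^sub>m (2^(2*n)) $$ (i,j)"
    using assms div_mod_eq_iff[of i j "2^n"]
    by (simp add: kron_def power_2_double div_mod_less_mult)
  finally show ?thesis .
qed

lemma bell_povm_is_povm: "is_povm (2^(2*n)) (4^n) (bell_povm n)"
  unfolding is_povm_def
proof (intro conjI allI impI bell_povm_sum)
  fix k
  show "psd (2^(2*n)) (bell_povm n k)"
    by (rule psd_of_gram[OF bell_povm_carrier, where R = "{()}" and u = "\<lambda>_. bell_vec n k"]) (simp_all add: bell_povm_def)
qed

lemma mtrace_outer_mult:
  assumes "K \<in> carrier_mat d d"
  shows "mtrace (mat d d (\<lambda>(i,j). u i * cnj (u j)) * K) = quad_form {..<d} (\<lambda>i j. K $$ (i,j)) u"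
proof -
  have "mtrace (mat d d (\<lambda>(i,j). u i * cnj (u j)) * K) = (\<Sum>i<d. \<Sum>j<d. cnj (u j) * K $$ (j,i) * u i)"
    using assms by (subst mtrace_mult[of _ d]) (auto simp: mult_ac intro!: sum.cong)
  also have "\<dots> = quad_form {..<d} (\<lambda>i j. K $$ (i,j)) u"
    unfolding quad_form_def by (rule sum.swap)
  finally show ?thesis .
qed

definition bell_prob :: "nat \<Rightarrow> complex mat \<Rightarrow> nat \<Rightarrow> real" where
  "bell_prob n \<rho> k = Re (mtrace (bell_povm n k * kron \<rho> \<rho>))"

lemma density_carrier: "density n \<rho> \<Longrightarrow> \<rho> \<in> carrier_mat (2^n) (2^n)"
  by (simp add: density_def psd_def)

lemma density_kron_carrier: "density n \<rho> \<Longrightarrow> kron \<rho> \<rho> \<in> carrier_mat (2^(2*n)) (2^(2*n))"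
  using kron_carrier[OF density_carrier density_carrier] by (simp add: power_2_double)

lemma bell_prob_nonneg:
  assumes "density n \<rho>"
  shows "0 \<le> bell_prob n \<rho> k"
proof -
  have "psd (2^(2*n)) (kron \<rho> \<rho>)"
    using psd_kron assms unfolding density_def by (metis power_2_double)
  then show ?thesis
    unfolding bell_prob_def bell_povm_def mtrace_outer_mult[OF density_kron_carrier[OF assms]]
    by (simp add: psd_iff_quad_form)
qed

lemma bell_prob_sign_sum:
  assumes "density n \<rho>" "length P = n"
  shows "(\<Sum>k<4^n. bell_prob n \<rho> k * word_sign P (word_of_index n k)) = (cmod (mtrace (pauli_obs P * \<rho>)))^2"
proof -
  have carr: "\<rho> \<in> carrier_mat (2^n) (2^n)" "pauli_obs P \<in> carrier_mat (2^n) (2^n)"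
    using density_carrier[OF assms(1)] assms(2) by auto
  have real: "Im (mtrace (pauli_obs P * \<rho>)) = 0"
    using mtrace_mult_hermitian_real[OF carr(2,1)] pauli_obs_hermitian[of P] psd_hermitian assms
    unfolding density_def by simp
  have "(\<Sum>k<4^n. complex_of_real (word_sign P (word_of_index n k)) * mtrace (bell_povm n k * kron \<rho> \<rho>))
      = mtrace (kron (pauli_obs P) (pauli_obs P) * kron \<rho> \<rho>)"
    using assms(2) kron_carrier[OF carr(2) carr(2)] density_kron_carrier[OF assms(1)]
    by (intro sum_mtrace_mult[OF bell_povm_carrier]) (simp_all add: bell_povm_sign_sum power_2_double)
  also have "\<dots> = mtrace (pauli_obs P * \<rho>) * mtrace (pauli_obs P * \<rho>)"
    by (rule mtrace_kron_mult[OF carr(2,1) carr(2,1)])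
  finally have sum_eq: "(\<Sum>k<4^n. complex_of_real (word_sign P (word_of_index n k)) * mtrace (bell_povm n k * kron \<rho> \<rho>))
      = mtrace (pauli_obs P * \<rho>) * mtrace (pauli_obs P * \<rho>)" .
  have "(\<Sum>k<4^n. bell_prob n \<rho> k * word_sign P (word_of_index n k))
      = Re (\<Sum>k<4^n. complex_of_real (word_sign P (word_of_index n k)) * mtrace (bell_povm n k * kron \<rho> \<rho>))"
    unfolding bell_prob_def by (simp add: Re_sum mult.commute)
  also have "\<dots> = Re (mtrace (pauli_obs P * \<rho>) * mtrace (pauli_obs P * \<rho>))"
    by (simp only: sum_eq)
  also have "\<dots> = (cmod (mtrace (pauli_obs P * \<rho>)))^2"
    using real by (simp add: cmod_power2) (simp add: power2_eq_square)
  finally show ?thesis .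
qed

lemma bell_prob_sum:
  assumes "density n \<rho>"
  shows "(\<Sum>k<4^n. bell_prob n \<rho> k) = 1"
  using bell_prob_sign_sum[OF assms, of "replicate n 0"] assms density_carrier[OF assms]
  by (simp add: word_sign_replicate_0 pauli_obs_replicate_0 density_def)

lemma pauli_expectation_sq_le_1:
  assumes "density n \<rho>" "length P = n"
  shows "(cmod (mtrace (pauli_obs P * \<rho>)))^2 \<le> 1"
proof -
  have "(cmod (mtrace (pauli_obs P * \<rho>)))^2 = (\<Sum>k<4^n. bell_prob n \<rho> k * word_sign P (word_of_index n k))"
    using bell_prob_sign_sum[OF assms] by simp
  also have "\<dots> \<le> (\<Sum>k<4^n. bell_prob n \<rho> k)"
    using bell_prob_nonneg[OF assms(1)] abs_word_sign_le_1
    by (intro sum_mono) (simp add: abs_le_iff mult_left_le)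
  finally show ?thesis using bell_prob_sum[OF assms(1)] by simp
qed

section \<open>Concentration of empirical means\<close>

lemma outcome_seqs_0: "outcome_seqs 0 m = {[]}"
  unfolding outcome_seqs_def by auto

lemma outcome_seqs_Suc: "outcome_seqs (Suc T) m = (\<lambda>(x,xs). x # xs) ` ({..<m} \<times> outcome_seqs T m)"
  unfolding outcome_seqs_def by (auto simp: length_Suc_conv image_iff)

lemma outcome_seqs_nth_less: "xs \<in> outcome_seqs T m \<Longrightarrow> t < T \<Longrightarrow> xs ! t < m"
  unfolding outcome_seqs_def using nth_mem by fastforce

lemma sum_outcome_seqs_prod:
  "(\<Sum>xs\<in>outcome_seqs T m. \<Prod>t<T. g (xs ! t)) = (\<Sum>k<m. g k :: 'a::comm_semiring_1) ^ T"
proof (induction T)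
  case 0
  then show ?case by (simp add: outcome_seqs_0)
next
  case (Suc T)
  have "inj_on (\<lambda>(x,xs). x # xs) ({..<m} \<times> outcome_seqs T m)"
    by (auto simp: inj_on_def)
  moreover have "(\<Prod>t<Suc T. g ((x # xs) ! t)) = g x * (\<Prod>t<T. g (xs ! t))" for x xs
    by (simp only: prod.lessThan_Suc_shift nth_Cons_0 nth_Cons_Suc)
  ultimately have "(\<Sum>xs\<in>outcome_seqs (Suc T) m. \<Prod>t<Suc T. g (xs ! t))
      = (\<Sum>(x,xs)\<in>{..<m} \<times> outcome_seqs T m. g x * (\<Prod>t<T. g (xs ! t)))"
    unfolding outcome_seqs_Suc by (simp add: sum.reindex case_prod_unfold)
  also have "\<dots> = (\<Sum>x<m. g x) * (\<Sum>xs\<in>outcome_seqs T m. \<Prod>t<T. g (xs ! t))"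
    by (simp add: sum.cartesian_product[symmetric] sum_product)
  finally show ?case using Suc.IH by simp
qed

lemma exp_le_quadratic:
  assumes "\<bar>y::real\<bar> \<le> 1"
  shows "exp y \<le> 1 + y + y^2"
proof -
  obtain t where t: "\<bar>t\<bar> \<le> \<bar>y\<bar>" and e: "exp y = (\<Sum>m<3. y ^ m / fact m) + exp t / fact 3 * y ^ 3"
    using Maclaurin_exp_le[of y 3] by blast
  have "exp t \<le> 3" using t assms exp_le by (meson exp_le_cancel_iff order_trans abs_le_D1)
  have "exp t / fact 3 * y ^ 3 \<le> \<bar>exp t / fact 3 * y ^ 3\<bar>" by (rule abs_ge_self)
  also have "\<dots> = exp t / 6 * \<bar>y\<bar>^3" by (simp add: abs_mult power_abs fact_numeral)
  also have "\<dots> \<le> 3 / 6 * \<bar>y\<bar>^2"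
    using \<open>exp t \<le> 3\<close> assms power_decreasing[of 2 3 "\<bar>y\<bar>"]
    by (intro mult_mono divide_right_mono) auto
  finally have "exp t / fact 3 * y ^ 3 \<le> y^2 / 2" by (simp add: power2_abs)
  moreover have "(\<Sum>m<3. y ^ m / fact m) = 1 + y + y^2/2"
    by (simp add: numeral_3_eq_3 power2_eq_square)
  ultimately show ?thesis using e by simp
qed

lemma centred_mgf_bound:
  fixes q X :: "nat \<Rightarrow> real"
  assumes q: "\<forall>k<m. 0 \<le> q k" "(\<Sum>k<m. q k) = 1" and X: "\<forall>k<m. \<bar>X k\<bar> \<le> 1"
    and l: "0 \<le> l" "l \<le> 1/2"
  defines "\<mu> \<equiv> \<Sum>k<m. q k * X k"
  shows "(\<Sum>k<m. q k * exp (l * (X k - \<mu>))) \<le> exp (4 * l^2)"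
proof -
  have "\<bar>\<mu>\<bar> \<le> (\<Sum>k<m. q k)"
    unfolding \<mu>_def using q X
    by (intro order_trans[OF sum_abs] sum_mono) (simp add: abs_mult mult_left_le)
  then have dev: "\<bar>X k - \<mu>\<bar> \<le> 2" if "k < m" for k using X q that by auto
  have "(\<Sum>k<m. q k * exp (l * (X k - \<mu>))) \<le> (\<Sum>k<m. q k * (1 + l * (X k - \<mu>) + l^2 * 4))"
  proof (intro sum_mono mult_left_mono)
    fix k assume "k \<in> {..<m}"
    then have "\<bar>l * (X k - \<mu>)\<bar> \<le> l * 2" using dev l by (simp add: abs_mult mult_left_mono)
    moreover have "(l * (X k - \<mu>))^2 \<le> l^2 * 4"
      using dev[of k] \<open>k \<in> {..<m}\<close> l power_mono[of "\<bar>X k - \<mu>\<bar>" 2 2]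
      by (simp add: power_mult_distrib mult_left_mono)
    ultimately show "exp (l * (X k - \<mu>)) \<le> 1 + l * (X k - \<mu>) + l^2 * 4"
      using exp_le_quadratic[of "l * (X k - \<mu>)"] l by simp
    show "0 \<le> q k" using q \<open>k \<in> {..<m}\<close> by simp
  qed
  also have "\<dots> = (\<Sum>k<m. q k) * (1 + 4 * l^2) + l * ((\<Sum>k<m. q k * X k) - (\<Sum>k<m. q k) * \<mu>)"
    by (simp add: algebra_simps sum.distrib sum_subtractf sum_distrib_left sum_distrib_right)
  also have "\<dots> = 1 + 4 * l^2" using q unfolding \<mu>_def by simp
  also have "\<dots> \<le> exp (4 * l^2)" by (rule exp_ge_add_one_self)
  finally show ?thesis .
qed

lemma chernoff_upper_tail:
  fixes q X :: "nat \<Rightarrow> real"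
  assumes q: "\<forall>k<m. 0 \<le> q k" "(\<Sum>k<m. q k) = 1" and X: "\<forall>k<m. \<bar>X k\<bar> \<le> 1"
    and eps: "0 < \<epsilon>" "\<epsilon> \<le> 1"
  shows "(\<Sum>xs\<in>outcome_seqs T m. if real T * \<epsilon> \<le> (\<Sum>t<T. X (xs ! t)) - real T * (\<Sum>k<m. q k * X k)
            then \<Prod>t<T. q (xs ! t) else 0) \<le> exp (- real T * \<epsilon>^2 / 16)"
proof -
  define \<mu> where "\<mu> = (\<Sum>k<m. q k * X k)"
  define l where "l = \<epsilon> / 8"
  define g where "g k = q k * exp (l * (X k - \<mu>))" for k
  have l: "0 < l" "l \<le> 1/2" using eps by (simp_all add: l_def)
  text \<open>Chernoff: the indicator of \<open>S - T\<mu> \<ge> T\<epsilon>\<close> is at most \<open>exp (l (S - T\<mu> - T\<epsilon>))\<close>.\<close>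
  have markov: "(if real T * \<epsilon> \<le> (\<Sum>t<T. X (xs ! t)) - real T * \<mu> then \<Prod>t<T. q (xs ! t) else 0)
        \<le> exp (- l * T * \<epsilon>) * (\<Prod>t<T. g (xs ! t))" if xs: "xs \<in> outcome_seqs T m" for xs
  proof -
    have "0 \<le> (\<Prod>t<T. q (xs ! t))" using q outcome_seqs_nth_less[OF xs] by (intro prod_nonneg) auto
    moreover have "exp (- l * T * \<epsilon>) * (\<Prod>t<T. g (xs ! t))
        = (\<Prod>t<T. q (xs ! t)) * exp (l * ((\<Sum>t<T. X (xs ! t)) - real T * \<mu> - real T * \<epsilon>))"
      unfolding g_def prod.distrib exp_sum[symmetric, OF finite_lessThan]
      by (simp add: sum_distrib_left sum_subtractf algebra_simps flip: exp_add)
    ultimately show ?thesis using l by (simp add: mult_le_cancel_left1)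
  qed
  have "(\<Sum>xs\<in>outcome_seqs T m. if real T * \<epsilon> \<le> (\<Sum>t<T. X (xs ! t)) - real T * \<mu> then \<Prod>t<T. q (xs ! t) else 0)
      \<le> (\<Sum>xs\<in>outcome_seqs T m. exp (- l * T * \<epsilon>) * (\<Prod>t<T. g (xs ! t)))"
    by (rule sum_mono) (rule markov)
  also have "\<dots> = exp (- l * T * \<epsilon>) * (\<Sum>k<m. g k)^T"
    by (simp add: sum_distrib_left[symmetric] sum_outcome_seqs_prod)
  also have "\<dots> \<le> exp (- l * T * \<epsilon>) * exp (4 * l^2)^T"
    using centred_mgf_bound[OF q X] l q unfolding g_def \<mu>_def
    by (intro mult_left_mono power_mono) (auto intro: sum_nonneg)
  also have "\<dots> = exp (- real T * \<epsilon>^2 / 16)"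
    unfolding l_def by (simp add: exp_of_nat_mult[symmetric] mult_exp_exp power2_eq_square field_simps)
  finally show ?thesis unfolding \<mu>_def .
qed

lemma chernoff_two_sided:
  fixes q X :: "nat \<Rightarrow> real"
  assumes q: "\<forall>k<m. 0 \<le> q k" "(\<Sum>k<m. q k) = 1" and X: "\<forall>k<m. \<bar>X k\<bar> \<le> 1"
    and eps: "0 < \<epsilon>" "\<epsilon> \<le> 1"
  shows "(\<Sum>xs\<in>outcome_seqs T m. if real T * \<epsilon> \<le> \<bar>(\<Sum>t<T. X (xs ! t)) - real T * (\<Sum>k<m. q k * X k)\<bar>
            then \<Prod>t<T. q (xs ! t) else 0) \<le> 2 * exp (- real T * \<epsilon>^2 / 16)"
proof -
  define pr where "pr xs = (\<Prod>t<T. q (xs ! t))" for xs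
  define dev where "dev xs = (\<Sum>t<T. X (xs ! t)) - real T * (\<Sum>k<m. q k * X k)" for xs
  have "\<forall>k<m. \<bar>- X k\<bar> \<le> 1" using X by simp
  note upper = chernoff_upper_tail[OF q X eps, of T] and lower = chernoff_upper_tail[OF q this eps, of T]
  have "(if real T * \<epsilon> \<le> \<bar>dev xs\<bar> then pr xs else 0)
      \<le> (if real T * \<epsilon> \<le> dev xs then pr xs else 0) + (if real T * \<epsilon> \<le> - dev xs then pr xs else 0)"
    if "xs \<in> outcome_seqs T m" for xs
    using q outcome_seqs_nth_less[OF that] prod_nonneg[of "{..<T}" "\<lambda>t. q (xs ! t)"]
    unfolding pr_def by auto
  moreover have "- dev xs = (\<Sum>t<T. - X (xs ! t)) - real T * (\<Sum>k<m. q k * - X k)" for xs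
    unfolding dev_def by (simp add: sum_negf)
  ultimately have "(\<Sum>xs\<in>outcome_seqs T m. if real T * \<epsilon> \<le> \<bar>dev xs\<bar> then pr xs else 0)
      \<le> (\<Sum>xs\<in>outcome_seqs T m. if real T * \<epsilon> \<le> dev xs then pr xs else 0)
        + (\<Sum>xs\<in>outcome_seqs T m. if real T * \<epsilon> \<le> (\<Sum>t<T. - X (xs ! t)) - real T * (\<Sum>k<m. q k * - X k)
            then pr xs else 0)"
    by (simp add: sum_mono flip: sum.distrib)
  also have "\<dots> \<le> exp (- real T * \<epsilon>^2 / 16) + exp (- real T * \<epsilon>^2 / 16)"
    unfolding pr_def dev_def by (rule add_mono[OF upper lower])
  finally show ?thesis unfolding pr_def dev_def by simp
qed

lemma uniform_deviation_bound:
  fixes q :: "nat \<Rightarrow> real" and X :: "nat \<Rightarrow> nat \<Rightarrow> real"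
  assumes q: "\<forall>k<m. 0 \<le> q k" "(\<Sum>k<m. q k) = 1" and X: "\<forall>i<M. \<forall>k<m. \<bar>X i k\<bar> \<le> 1"
    and eps: "0 < \<epsilon>" "\<epsilon> \<le> 1" and T: "0 < T"
  shows "1 - 2 * real M * exp (- real T * \<epsilon>^2 / 16) \<le> (\<Sum>xs\<in>outcome_seqs T m.
     if \<forall>i<M. \<bar>(\<Sum>t<T. X i (xs ! t)) / T - (\<Sum>k<m. q k * X i k)\<bar> \<le> \<epsilon> then \<Prod>t<T. q (xs ! t) else 0)"
proof -
  define pr where "pr xs = (\<Prod>t<T. q (xs ! t))" for xs
  define dev where "dev i xs = (\<Sum>t<T. X i (xs ! t)) - real T * (\<Sum>k<m. q k * X i k)" for i xs
  define good where "good xs \<longleftrightarrow> (\<forall>i<M. \<bar>dev i xs\<bar> \<le> real T * \<epsilon>)" for xs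
  define tail where "tail i xs = (if real T * \<epsilon> \<le> \<bar>dev i xs\<bar> then pr xs else 0)" for i xs
  have pr_nonneg: "0 \<le> pr xs" if "xs \<in> outcome_seqs T m" for xs
    unfolding pr_def using q outcome_seqs_nth_less[OF that] by (intro prod_nonneg) auto
  have good_iff: "good xs \<longleftrightarrow> (\<forall>i<M. \<bar>(\<Sum>t<T. X i (xs ! t)) / T - (\<Sum>k<m. q k * X i k)\<bar> \<le> \<epsilon>)" for xs
  proof -
    have "(\<Sum>t<T. X i (xs ! t)) / T - (\<Sum>k<m. q k * X i k) = dev i xs / T" for i
      using T unfolding dev_def by (simp add: diff_divide_distrib)
    then have "\<bar>(\<Sum>t<T. X i (xs ! t)) / T - (\<Sum>k<m. q k * X i k)\<bar> = \<bar>dev i xs\<bar> / T" for i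
      by (simp add: abs_divide)
    then show ?thesis unfolding good_def using T by (simp add: divide_le_eq mult.commute)
  qed
  have union: "(if good xs then 0 else pr xs) \<le> (\<Sum>i<M. tail i xs)" if xs: "xs \<in> outcome_seqs T m" for xs
  proof (cases "good xs")
    case False
    then obtain i where "i < M" "real T * \<epsilon> < \<bar>dev i xs\<bar>" unfolding good_def by auto
    then have "pr xs = tail i xs" unfolding tail_def by simp
    also have "\<dots> \<le> (\<Sum>i<M. tail i xs)"
      using \<open>i < M\<close> pr_nonneg[OF xs] by (intro member_le_sum) (auto simp: tail_def)
    finally show ?thesis using False by simp
  qed (use pr_nonneg[OF xs] in \<open>auto simp: tail_def intro: sum_nonneg\<close>)
  have "(\<Sum>xs\<in>outcome_seqs T m. if good xs then 0 else pr xs) \<le> (\<Sum>i<M. \<Sum>xs\<in>outcome_seqs T m. tail i xs)"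
    using sum_mono[OF union] by (simp add: sum.swap[of _ "outcome_seqs T m"])
  also have "\<dots> \<le> (\<Sum>i<M. 2 * exp (- real T * \<epsilon>^2 / 16))"
    using chernoff_two_sided[OF q _ eps] X unfolding tail_def pr_def dev_def by (intro sum_mono) simp
  finally have "(\<Sum>xs\<in>outcome_seqs T m. if good xs then 0 else pr xs) \<le> 2 * real M * exp (- real T * \<epsilon>^2 / 16)"
    by simp
  moreover have "(\<Sum>xs\<in>outcome_seqs T m. pr xs) = 1"
    unfolding pr_def using sum_outcome_seqs_prod[of q T m] q by simp
  moreover have "(\<Sum>xs\<in>outcome_seqs T m. if good xs then pr xs else 0)
      = (\<Sum>xs\<in>outcome_seqs T m. pr xs) - (\<Sum>xs\<in>outcome_seqs T m. if good xs then 0 else pr xs)"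
    by (simp add: sum_subtractf[symmetric] if_distrib cong: if_cong)
  ultimately have "1 - 2 * real M * exp (- real T * \<epsilon>^2 / 16)
      \<le> (\<Sum>xs\<in>outcome_seqs T m. if good xs then pr xs else 0)"
    by linarith
  then show ?thesis by (simp only: good_iff pr_def)
qed

lemma chernoff_rounds:
  assumes M: "1 \<le> M" and eps: "0 < \<epsilon>" "\<epsilon> < 1"
  defines "T \<equiv> nat \<lceil>16 * ln (6 * real M) / \<epsilon>^2\<rceil>"
  shows "real (2 * T) \<le> 200 * ln (real M + 1) / \<epsilon>^2" and "0 < T"
    and "2 * real M * exp (- real T * \<epsilon>^2 / 16) \<le> 1/3"
proof -
  define x where "x = 16 * ln (6 * real M) / \<epsilon>^2"
  define L where "L = ln (real M + 1)"
  have e2: "0 < \<epsilon>^2" "\<epsilon>^2 < 1" using eps by (auto simp: power_less_one_iff)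
  have "0 < ln (6 * real M)" using M by simp
  then have "0 < x" unfolding x_def using e2 by simp
  have Tx: "x \<le> real T" unfolding T_def x_def[symmetric] by (rule real_nat_ceiling_ge)
  have Tx1: "real T \<le> x + 1"
    unfolding T_def x_def[symmetric] using \<open>0 < x\<close> of_int_ceiling_le_add_one[of x] by simp
  have "ln 2 \<le> L" unfolding L_def using M by simp
  moreover have "1/2 \<le> ln (2::real)"
    using ln_le_cancel_iff[of "exp (1/2)" 2] exp_half_le2 by simp
  ultimately have Lh: "1/2 \<le> L" by simp
  have "ln (6 * real M) = ln 6 + ln (real M)" using M by (simp add: ln_mult)
  also have "ln (6::real) \<le> ln 8" by simp
  also have "ln (8::real) = 3 * ln 2" using ln_realpow[of 2 3] by simp
  also have "ln (real M) \<le> L" unfolding L_def using M by simp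
  finally have "ln (6 * real M) \<le> 4 * L" using \<open>ln 2 \<le> L\<close> by simp
  then have "x \<le> 64 * L / \<epsilon>^2" unfolding x_def using e2 by (simp add: divide_right_mono)
  moreover have "1 \<le> 2 * L / \<epsilon>^2" using e2 Lh by (simp add: le_divide_eq)
  ultimately have "real T \<le> 66 * L / \<epsilon>^2" using Tx1 by (simp add: add_divide_distrib[symmetric])
  then show "real (2 * T) \<le> 200 * ln (real M + 1) / \<epsilon>^2"
    using Lh e2 unfolding L_def by (simp add: divide_right_mono)
  show "0 < T" using Tx \<open>0 < x\<close> by simp
  have "ln (6 * real M) \<le> real T * \<epsilon>^2 / 16"
    using Tx e2 unfolding x_def by (simp add: divide_le_eq mult.commute)
  then have "exp (- real T * \<epsilon>^2 / 16) \<le> exp (- ln (6 * real M))" by simp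
  also have "\<dots> = 1 / (6 * real M)" using M by (simp add: exp_minus inverse_eq_divide)
  finally have "exp (- real T * \<epsilon>^2 / 16) \<le> 1 / (6 * real M)" .
  then show "2 * real M * exp (- real T * \<epsilon>^2 / 16) \<le> 1/3"
    using M by (simp add: field_simps)
qed

definition bell_estimate :: "nat \<Rightarrow> nat \<Rightarrow> (nat \<Rightarrow> nat list) \<Rightarrow> nat list \<Rightarrow> nat \<Rightarrow> real" where
  "bell_estimate n T P xs i = (\<Sum>t<T. word_sign (P i) (word_of_index n (xs ! t))) / real T"

lemma valid_bell_protocol: "valid_protocol n T (4^n) (\<lambda>_. bell_povm n)"
  unfolding valid_protocol_def using bell_povm_is_povm by blast

lemma success_prob_zero_rounds:
  "success_prob 0 m E est M P \<epsilon> \<rho>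
    = (if \<forall>i<M. \<bar>est [] i - (cmod (mtrace (pauli_obs (P i) * \<rho>)))^2\<bar> \<le> \<epsilon> then 1 else 0)"
  unfolding success_prob_def outcome_seqs_0 by (simp add: seq_prob_def)

lemma bell_protocol_success:
  assumes dens: "density n \<rho>" and words: "\<forall>i<M. is_pauli_word n (P i)"
    and eps: "0 < \<epsilon>" "\<epsilon> \<le> 1" and T: "0 < T"
  shows "1 - 2 * real M * exp (- real T * \<epsilon>^2 / 16)
    \<le> success_prob T (4^n) (\<lambda>_. bell_povm n) (bell_estimate n T P) M P \<epsilon> \<rho>"
proof -
  define X where "X i k = word_sign (P i) (word_of_index n k)" for i k
  have target: "(cmod (mtrace (pauli_obs (P i) * \<rho>)))^2 = (\<Sum>k<4^n. bell_prob n \<rho> k * X i k)" if "i < M" for i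
    using bell_prob_sign_sum[OF dens, of "P i"] words that by (simp add: is_pauli_word_def X_def)
  have "success_prob T (4^n) (\<lambda>_. bell_povm n) (bell_estimate n T P) M P \<epsilon> \<rho>
      = (\<Sum>xs\<in>outcome_seqs T (4^n). if \<forall>i<M. \<bar>(\<Sum>t<T. X i (xs ! t)) / T - (\<Sum>k<4^n. bell_prob n \<rho> k * X i k)\<bar> \<le> \<epsilon>
          then \<Prod>t<T. bell_prob n \<rho> (xs ! t) else 0)"
    unfolding success_prob_def
  proof (rule sum.cong[OF refl])
    fix xs assume "xs \<in> outcome_seqs T (4^n)"
    have "(\<forall>i<M. \<bar>bell_estimate n T P xs i - (cmod (mtrace (pauli_obs (P i) * \<rho>)))^2\<bar> \<le> \<epsilon>)
        \<longleftrightarrow> (\<forall>i<M. \<bar>(\<Sum>t<T. X i (xs ! t)) / T - (\<Sum>k<4^n. bell_prob n \<rho> k * X i k)\<bar> \<le> \<epsilon>)"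
      using target by (auto simp: bell_estimate_def X_def)
    moreover from \<open>xs \<in> _\<close> have "seq_prob \<rho> (\<lambda>_. bell_povm n) xs = (\<Prod>t<T. bell_prob n \<rho> (xs ! t))"
      by (simp add: outcome_seqs_def seq_prob_def bell_prob_def)
    ultimately show "(if \<forall>i<M. \<bar>bell_estimate n T P xs i - (cmod (mtrace (pauli_obs (P i) * \<rho>)))^2\<bar> \<le> \<epsilon>
          then seq_prob \<rho> (\<lambda>_. bell_povm n) xs else 0)
        = (if \<forall>i<M. \<bar>(\<Sum>t<T. X i (xs ! t)) / T - (\<Sum>k<4^n. bell_prob n \<rho> k * X i k)\<bar> \<le> \<epsilon>
          then \<Prod>t<T. bell_prob n \<rho> (xs ! t) else 0)"
      by (simp only:)
  qed
  moreover have "1 - 2 * real M * exp (- real T * \<epsilon>^2 / 16)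
      \<le> (\<Sum>xs\<in>outcome_seqs T (4^n). if \<forall>i<M. \<bar>(\<Sum>t<T. X i (xs ! t)) / T - (\<Sum>k<4^n. bell_prob n \<rho> k * X i k)\<bar> \<le> \<epsilon>
          then \<Prod>t<T. bell_prob n \<rho> (xs ! t) else 0)"
    by (rule uniform_deviation_bound[OF _ bell_prob_sum[OF dens] _ eps T])
      (simp_all add: bell_prob_nonneg[OF dens] abs_word_sign_le_1 X_def)
  ultimately show ?thesis by simp
qed

lemma trivial_protocol_success:
  assumes dens: "density n \<rho>" and words: "\<forall>i<M. is_pauli_word n (P i)" and "M = 0 \<or> 1 \<le> \<epsilon>"
  shows "success_prob 0 m E (bell_estimate n 0 P) M P \<epsilon> \<rho> = 1"
proof -
  text \<open>No measurement is needed: the estimate \<open>0\<close> is \<open>\<epsilon>\<close>-close to every \<open>|Tr(P\<^sub>i\<rho>)|\<^sup>2 \<in> [0,1]\<close>.\<close>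
  have "(cmod (mtrace (pauli_obs (P i) * \<rho>)))^2 \<le> \<epsilon>" if "i < M" for i
  proof -
    have "(cmod (mtrace (pauli_obs (P i) * \<rho>)))^2 \<le> 1"
      using pauli_expectation_sq_le_1[OF dens] words that by (simp add: is_pauli_word_def)
    then show ?thesis using assms(3) that by auto
  qed
  then show ?thesis by (auto simp: success_prob_zero_rounds bell_estimate_def)
qed

theorem mainTheorem12:
  shows "\<exists>C>0. \<forall>n M (P :: nat \<Rightarrow> nat list) (\<epsilon>::real).
     \<epsilon> > 0 \<longrightarrow> (\<forall>i<M. is_pauli_word n (P i)) \<longrightarrow>
     (\<exists>T m E est. valid_protocol n T m E \<and>
        real (2 * T) \<le> C * ln (real M + 1) / \<epsilon>^2 \<and>
        (\<forall>\<rho>. density n \<rho> \<longrightarrow> success_prob T m E est M P \<epsilon> \<rho> \<ge> 2/3))"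
proof (intro exI[of _ "200::real"] conjI allI impI)
  fix n M and P :: "nat \<Rightarrow> nat list" and \<epsilon> :: real
  assume eps: "\<epsilon> > 0" and words: "\<forall>i<M. is_pauli_word n (P i)"
  show "\<exists>T m E est. valid_protocol n T m E \<and> real (2 * T) \<le> 200 * ln (real M + 1) / \<epsilon>^2 \<and>
        (\<forall>\<rho>. density n \<rho> \<longrightarrow> success_prob T m E est M P \<epsilon> \<rho> \<ge> 2/3)"
  proof (cases "M = 0 \<or> 1 \<le> \<epsilon>")
    case True
    then have "success_prob 0 (4^n) (\<lambda>_. bell_povm n) (bell_estimate n 0 P) M P \<epsilon> \<rho> = 1"
      if "density n \<rho>" for \<rho>
      using trivial_protocol_success[OF that words] by blast
    then show ?thesis
      using valid_bell_protocol[of n 0] eps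
      by (intro exI[of _ 0] exI[of _ "4^n"] exI[of _ "\<lambda>_. bell_povm n"] exI[of _ "bell_estimate n 0 P"]) simp
  next
    case False
    then have "1 \<le> M" "\<epsilon> < 1" by auto
    define T where "T = nat \<lceil>16 * ln (6 * real M) / \<epsilon>^2\<rceil>"
    note rounds = chernoff_rounds[OF \<open>1 \<le> M\<close> eps \<open>\<epsilon> < 1\<close>, folded T_def]
    have "2/3 \<le> success_prob T (4^n) (\<lambda>_. bell_povm n) (bell_estimate n T P) M P \<epsilon> \<rho>"
      if "density n \<rho>" for \<rho>
      using bell_protocol_success[OF that words eps _ rounds(2)] rounds(3) \<open>\<epsilon> < 1\<close> by simp
    then show ?thesis
      using valid_bell_protocol[of n T] rounds(1)
      by (intro exI[of _ T] exI[of _ "4^n"] exI[of _ "\<lambda>_. bell_povm n"] exI[of _ "bell_estimate n T P"]) simp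
  qed
qed simp

end
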